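(* Let $k$ be a field of characteristic zero, let $q\in k\setminus\{0\}$ not be a root of unity, and let $\phi\in\{\sigma_x,\tau_{x,q}\}$. Let $f\in k(x,y)$ and suppose $f=\phi(g)-g+D_y(h)+\sum_{i=1}^m a_i/d_i$ with $g,h\in k(x,y)$, where $a_i\in k(x)[y]$ are nonzero, $d_i\in k[x,y]$ are irreducible, $\deg_y(a_i)<\deg_y(d_i)$, and the $d_i$ lie in pairwise distinct $\phi$-orbits. Then $f$ is exact with respect to $(\phi-1,D_y)$ if and only if for each $i\in\{1,\dots,m\}$ we have $d_i\in k[y]$ and $a_i=\phi(b_i)-b_i$ for some $b_i\in k(x)[y]$.
   Context: On $k(x,y)$: $\sigma_x(f(x,y))=f(x+1,y)$, $\tau_{x,q}(f(x,y))=f(qx,y)$, $D_y=\partial/\partial y$. The $\phi$-orbit of a polynomial $p$ is $\{\phi^i(p):i\in\mathbb{Z}\}$. A rational function $f$ is exact with respect to $(\partial_x,\partial_y)$ if $f=\partial_x(g)+\partial_y(h)$ for some $g,h\in k(x,y)$. The decomposition in the hypothesis is called a $(\phi,D_y)$-reduced form of $f$. *)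

theory Defs
  imports "HOL-Computational_Algebra.Computational_Algebra"
begin

text \<open>Representation.
  k(x)      = 'a poly fract
  k(x)[y]   = 'a poly fract poly   (outer variable is y)
  k[x,y]    = 'a poly poly         (inner variable x, outer variable y)
  k(x,y)    = 'a poly fract poly fract\<close>

datatype op_kind = Shift | QShift   \<comment> \<open>Shift: sigma_x (x -> x+1); QShift: tau_{x,q} (x -> q x)\<close>

definition xsub :: "op_kind \<Rightarrow> 'a::field_char_0 \<Rightarrow> int \<Rightarrow> 'a poly" where
  "xsub kd q n = (case kd of Shift \<Rightarrow> [:of_int n, 1:] | QShift \<Rightarrow> [:0, q powi n:])"

definition phi_pow_xy :: "op_kind \<Rightarrow> 'a::field_char_0 \<Rightarrow> int \<Rightarrow> 'a poly poly \<Rightarrow> 'a poly poly" where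
  "phi_pow_xy kd q n d = map_poly (\<lambda>c. pcompose c (xsub kd q n)) d"

definition phi_x :: "op_kind \<Rightarrow> 'a::field_char_0 \<Rightarrow> 'a poly fract \<Rightarrow> 'a poly fract" where
  "phi_x kd q r = (SOME r'. \<exists>a b. b \<noteq> 0 \<and> r = Fract a b \<and>
       r' = Fract (pcompose a (xsub kd q 1)) (pcompose b (xsub kd q 1)))"

definition phi_y :: "op_kind \<Rightarrow> 'a::field_char_0 \<Rightarrow> 'a poly fract poly \<Rightarrow> 'a poly fract poly" where
  "phi_y kd q p = map_poly (phi_x kd q) p"

definition phi_xy :: "op_kind \<Rightarrow> 'a::field_char_0 \<Rightarrow> 'a poly fract poly fract \<Rightarrow> 'a poly fract poly fract" where
  "phi_xy kd q r = (SOME r'. \<exists>a b. b \<noteq> 0 \<and> r = Fract a b \<and>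
       r' = Fract (phi_y kd q a) (phi_y kd q b))"

definition Dy :: "'a::field_char_0 poly fract poly fract \<Rightarrow> 'a poly fract poly fract" where
  "Dy r = (SOME r'. \<exists>a b. b \<noteq> 0 \<and> r = Fract a b \<and>
       r' = Fract (pderiv a * b - a * pderiv b) (b * b))"

definition exact_phi :: "op_kind \<Rightarrow> 'a::field_char_0 \<Rightarrow> 'a poly fract poly fract \<Rightarrow> bool" where
  "exact_phi kd q f \<longleftrightarrow> (\<exists>g h. f = phi_xy kd q g - g + Dy h)"

definition same_orbit :: "op_kind \<Rightarrow> 'a::field_char_0 \<Rightarrow> 'a poly poly \<Rightarrow> 'a poly poly \<Rightarrow> bool" where
  "same_orbit kd q d e \<longleftrightarrow> (\<exists>n c. c \<noteq> 0 \<and> e = smult [:c:] (phi_pow_xy kd q n d))"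

abbreviation emb_xy :: "'a::field_char_0 poly poly \<Rightarrow> 'a poly fract poly" where
  "emb_xy d \<equiv> map_poly to_fract d"

end

theory Submission
  imports Defs
begin

(* Write T_i = a_i/d_i.  If f is exact, subtracting the two decompositions gives
   phi(G) - G + D_y(H) = sum_j T_j for some G, H.  At a prime phi^n(d_i) of k(x)[y] the terms T_j,
   j ~= i, have no pole, since the d_j lie in other orbits; so phi(G) - G - T_i is regular there
   modulo derivatives.  This still detects simple poles: by Hermite reduction a derivative never
   has a simple pole.
   If d_i involved x, its orbit would consist of pairwise non-associated primes, only finitely many
   of which divide the denominator of G.  Applying phi^j for j = 0..2K to the congruence and
   summing, the left side telescopes to phi^(2K+1)(G) - G, which is regular at phi^K(d_i), whereas
   phi^K(T_i) keeps a simple pole there; this contradicts deg a_i < deg d_i.  So d_i lies in k[y],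
   is fixed by phi, and comparing the simple-pole parts at d_i of G and phi(G) gives
   a_i = phi(b) - b, b being the simple-pole numerator of G reduced modulo d_i.  Conversely
   sum_i b_i/d_i is then a phi-difference. *)

section \<open>The operators on k(x), k(x)[y] and k(x,y)\<close>

lemma some_Fract_eq:
  assumes "b \<noteq> 0" and "\<And>a' b'. b' \<noteq> 0 \<Longrightarrow> Fract a b = Fract a' b' \<Longrightarrow> F a' b' = F a b"
  shows "(SOME r. \<exists>a' b'. b' \<noteq> 0 \<and> Fract a b = Fract a' b' \<and> r = F a' b') = F a b"
  by (rule some_equality) (use assms in blast)+

lemma map_poly_add_hom:
  assumes "\<And>x y. f (x + y) = f x + f y" "f 0 = 0"
  shows "map_poly f (p + r) = map_poly f p + map_poly f r"
  by (intro poly_eqI) (simp add: coeff_map_poly assms)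

lemma map_poly_mult_hom:
  fixes f :: "'a::comm_ring_1 \<Rightarrow> 'b::comm_ring_1"
  assumes add: "\<And>x y. f (x + y) = f x + f y" and mult: "\<And>x y. f (x * y) = f x * f y"
    and zero: "f 0 = 0"
  shows "map_poly f (p * r) = map_poly f p * map_poly f r"
proof (induction p)
  case (pCons a p)
  have "map_poly f (pCons a p * r) = map_poly f (smult a r + pCons 0 (p * r))" by simp
  also have "\<dots> = smult (f a) (map_poly f r) + pCons 0 (map_poly f p * map_poly f r)"
    by (simp add: map_poly_add_hom[of f, OF add zero] map_poly_smult[of f, OF zero mult]
        map_poly_pCons[of f, OF zero] pCons.IH zero)
  also have "\<dots> = map_poly f (pCons a p) * map_poly f r"
    by (simp add: map_poly_pCons[of f, OF zero])
  finally show ?case .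
qed simp

definition phi_x_pow :: "op_kind \<Rightarrow> 'a::field_char_0 \<Rightarrow> int \<Rightarrow> 'a poly fract \<Rightarrow> 'a poly fract" where
  "phi_x_pow kd q n r = (SOME r'. \<exists>a b. b \<noteq> 0 \<and> r = Fract a b \<and>
       r' = Fract (pcompose a (xsub kd q n)) (pcompose b (xsub kd q n)))"

definition phi_y_pow :: "op_kind \<Rightarrow> 'a::field_char_0 \<Rightarrow> int \<Rightarrow> 'a poly fract poly \<Rightarrow> 'a poly fract poly" where
  "phi_y_pow kd q n p = map_poly (phi_x_pow kd q n) p"

lemma phi_x_eq_phi_x_pow: "phi_x kd q = phi_x_pow kd q 1"
  by (rule ext) (simp add: phi_x_def phi_x_pow_def)

lemma phi_y_eq_phi_y_pow: "phi_y kd q = phi_y_pow kd q 1"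
  by (rule ext) (simp add: phi_y_def phi_y_pow_def phi_x_eq_phi_x_pow)

lemma xsub_0: "xsub kd q 0 = [:0, 1:]"
  by (cases kd) (auto simp: xsub_def)

context
  fixes kd :: op_kind and q :: "'a::field_char_0"
  assumes q: "q \<noteq> 0"
begin

lemma degree_xsub: "degree (xsub kd q n) = 1"
  using q by (cases kd) (auto simp: xsub_def)

lemma pcompose_xsub_xsub: "pcompose (xsub kd q n) (xsub kd q m) = xsub kd q (n + m)"
  using q by (cases kd) (auto simp: xsub_def pcompose_pCons power_int_add algebra_simps)

lemma pcompose_xsub_eq_0_iff [simp]: "pcompose c (xsub kd q n) = 0 \<longleftrightarrow> c = 0"
  using pcompose_eq_0_iff[of "xsub kd q n" c] by (simp add: degree_xsub)

lemma pcompose_pcompose_xsub: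
  "pcompose (pcompose c (xsub kd q n)) (xsub kd q m) = pcompose c (xsub kd q (n + m))"
  by (metis pcompose_assoc pcompose_xsub_xsub)

lemma phi_x_pow_Fract:
  assumes b: "b \<noteq> 0"
  shows "phi_x_pow kd q n (Fract a b) = Fract (pcompose a (xsub kd q n)) (pcompose b (xsub kd q n))"
  unfolding phi_x_pow_def
proof (rule some_Fract_eq[OF b])
  fix a' b' assume "b' \<noteq> 0" "Fract a b = Fract a' b'"
  with b have "pcompose (a * b') (xsub kd q n) = pcompose (a' * b) (xsub kd q n)"
    by (simp add: eq_fract)
  with b \<open>b' \<noteq> 0\<close> show "Fract (pcompose a' (xsub kd q n)) (pcompose b' (xsub kd q n)) =
      Fract (pcompose a (xsub kd q n)) (pcompose b (xsub kd q n))"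
    by (simp add: eq_fract pcompose_mult)
qed

lemma phi_x_pow_add: "phi_x_pow kd q n (x + y) = phi_x_pow kd q n x + phi_x_pow kd q n y"
  by (cases x, cases y) (simp add: phi_x_pow_Fract pcompose_add pcompose_mult)

lemma phi_x_pow_mult: "phi_x_pow kd q n (x * y) = phi_x_pow kd q n x * phi_x_pow kd q n y"
  by (cases x, cases y) (simp add: phi_x_pow_Fract pcompose_mult)

lemma phi_x_pow_0 [simp]: "phi_x_pow kd q n 0 = 0"
  by (subst (1 2) Zero_fract_def) (simp add: phi_x_pow_Fract eq_fract)

lemma phi_x_pow_1 [simp]: "phi_x_pow kd q n 1 = 1"
  by (subst (1 2) One_fract_def) (simp add: phi_x_pow_Fract pcompose_1)

lemma phi_x_pow_of_nat [simp]: "phi_x_pow kd q n (of_nat k) = of_nat k"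
  by (induction k) (simp_all add: phi_x_pow_add)

lemma phi_x_pow_to_fract: "phi_x_pow kd q n (to_fract c) = to_fract (pcompose c (xsub kd q n))"
  by (simp add: to_fract_def phi_x_pow_Fract pcompose_1)

lemma phi_x_pow_phi_x_pow: "phi_x_pow kd q n (phi_x_pow kd q m x) = phi_x_pow kd q (m + n) x"
  by (cases x) (simp add: phi_x_pow_Fract pcompose_pcompose_xsub)

lemma phi_x_pow_zero [simp]: "phi_x_pow kd q 0 x = x"
  by (cases x) (simp add: phi_x_pow_Fract xsub_0)

lemma phi_x_pow_inverse: "phi_x_pow kd q (- n) (phi_x_pow kd q n x) = x"
  by (simp add: phi_x_pow_phi_x_pow)

lemma phi_x_pow_eq_0_iff [simp]: "phi_x_pow kd q n x = 0 \<longleftrightarrow> x = 0"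
  using phi_x_pow_inverse[of n x] by auto

lemma coeff_phi_y_pow: "coeff (phi_y_pow kd q n p) j = phi_x_pow kd q n (coeff p j)"
  by (simp add: phi_y_pow_def coeff_map_poly)

lemma phi_y_pow_add: "phi_y_pow kd q n (x + y) = phi_y_pow kd q n x + phi_y_pow kd q n y"
  by (rule poly_eqI) (simp add: coeff_phi_y_pow phi_x_pow_add)

lemma phi_y_pow_diff: "phi_y_pow kd q n (x - y) = phi_y_pow kd q n x - phi_y_pow kd q n y"
  using phi_y_pow_add[of n "x - y" y] by (simp add: eq_diff_eq)

lemma phi_y_pow_mult: "phi_y_pow kd q n (x * y) = phi_y_pow kd q n x * phi_y_pow kd q n y"
  unfolding phi_y_pow_def by (rule map_poly_mult_hom) (simp_all add: phi_x_pow_add phi_x_pow_mult)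

lemma phi_y_pow_0 [simp]: "phi_y_pow kd q n 0 = 0"
  by (simp add: phi_y_pow_def)

lemma phi_y_pow_1 [simp]: "phi_y_pow kd q n 1 = 1"
  by (simp add: phi_y_pow_def)

lemma phi_y_pow_zero [simp]: "phi_y_pow kd q 0 p = p"
  by (rule poly_eqI) (simp add: coeff_phi_y_pow)

lemma phi_y_pow_phi_y_pow: "phi_y_pow kd q n (phi_y_pow kd q m p) = phi_y_pow kd q (m + n) p"
  by (rule poly_eqI) (simp add: coeff_phi_y_pow phi_x_pow_phi_x_pow)

lemma phi_y_pow_inverse: "phi_y_pow kd q (- n) (phi_y_pow kd q n p) = p"
  by (simp add: phi_y_pow_phi_y_pow)

lemma phi_y_pow_eq_0_iff [simp]: "phi_y_pow kd q n x = 0 \<longleftrightarrow> x = 0"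
  using phi_y_pow_inverse[of n x] by auto

lemma degree_phi_y_pow [simp]: "degree (phi_y_pow kd q n p) = degree p"
  unfolding phi_y_pow_def by (rule degree_map_poly) simp

lemma pderiv_phi_y_pow: "pderiv (phi_y_pow kd q n p) = phi_y_pow kd q n (pderiv p)"
proof (rule poly_eqI)
  fix j
  have "phi_x_pow kd q n (of_nat (Suc j) * coeff p (Suc j)) =
      of_nat (Suc j) * phi_x_pow kd q n (coeff p (Suc j))"
    by (simp only: phi_x_pow_mult phi_x_pow_of_nat)
  then show "coeff (pderiv (phi_y_pow kd q n p)) j = coeff (phi_y_pow kd q n (pderiv p)) j"
    by (simp add: coeff_pderiv coeff_phi_y_pow)
qed

lemma phi_y_pow_dvd_iff: "phi_y_pow kd q n s dvd phi_y_pow kd q n y \<longleftrightarrow> s dvd y"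
proof
  assume "phi_y_pow kd q n s dvd phi_y_pow kd q n y"
  then obtain z where "phi_y_pow kd q n y = phi_y_pow kd q n s * z" by (elim dvdE)
  then have "y = s * phi_y_pow kd q (- n) z"
    by (metis phi_y_pow_inverse phi_y_pow_mult)
  then show "s dvd y" by simp
next
  assume "s dvd y"
  then obtain z where "y = s * z" by (elim dvdE)
  then show "phi_y_pow kd q n s dvd phi_y_pow kd q n y" by (simp add: phi_y_pow_mult)
qed

lemma coeff_phi_pow_xy: "coeff (phi_pow_xy kd q n d) j = pcompose (coeff d j) (xsub kd q n)"
  by (simp add: phi_pow_xy_def coeff_map_poly)

lemma phi_y_pow_emb_xy: "phi_y_pow kd q n (emb_xy d) = emb_xy (phi_pow_xy kd q n d)"
  by (rule poly_eqI) (simp add: coeff_phi_y_pow coeff_map_poly coeff_phi_pow_xy phi_x_pow_to_fract)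

lemma phi_pow_xy_phi_pow_xy: "phi_pow_xy kd q n (phi_pow_xy kd q m d) = phi_pow_xy kd q (m + n) d"
  by (rule poly_eqI) (simp add: coeff_phi_pow_xy pcompose_pcompose_xsub)

lemma phi_pow_xy_zero [simp]: "phi_pow_xy kd q 0 d = d"
  by (rule poly_eqI) (simp add: coeff_phi_pow_xy xsub_0)

lemma phi_pow_xy_inverse: "phi_pow_xy kd q (- n) (phi_pow_xy kd q n d) = d"
  by (simp add: phi_pow_xy_phi_pow_xy)

lemma phi_pow_xy_mult: "phi_pow_xy kd q n (x * y) = phi_pow_xy kd q n x * phi_pow_xy kd q n y"
  unfolding phi_pow_xy_def by (rule map_poly_mult_hom) (simp_all add: pcompose_add pcompose_mult)

lemma phi_pow_xy_smult_const:
  "phi_pow_xy kd q n (smult [:c:] d) = smult [:c:] (phi_pow_xy kd q n d)"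
  by (rule poly_eqI) (simp add: coeff_phi_pow_xy pcompose_smult)

lemma phi_pow_xy_eq_0_iff [simp]: "phi_pow_xy kd q n d = 0 \<longleftrightarrow> d = 0"
  using phi_pow_xy_inverse[of n d] by (auto simp: phi_pow_xy_def)

lemma degree_phi_pow_xy [simp]: "degree (phi_pow_xy kd q n p) = degree p"
  unfolding phi_pow_xy_def by (rule degree_map_poly) simp

lemma phi_pow_xy_const_coeffs:
  assumes "\<forall>j. degree (coeff d j) = 0"
  shows "phi_pow_xy kd q n d = d"
proof (rule poly_eqI)
  fix j
  from assms obtain c where "coeff d j = [:c:]" by (metis degree_eq_zeroE)
  then show "coeff (phi_pow_xy kd q n d) j = coeff d j" by (simp add: coeff_phi_pow_xy)
qed

lemma is_unit_phi_pow_xy: "is_unit d \<Longrightarrow> is_unit (phi_pow_xy kd q n d)"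
proof -
  assume "is_unit d"
  then obtain e where e: "d * e = 1" by (metis dvdE)
  have one: "phi_pow_xy kd q n 1 = 1" by (simp add: phi_pow_xy_def pcompose_1)
  have "phi_pow_xy kd q n d * phi_pow_xy kd q n e = 1"
    by (simp add: e one flip: phi_pow_xy_mult)
  then show ?thesis by (rule dvdI[OF sym])
qed

lemma is_unit_phi_pow_xy_iff: "is_unit (phi_pow_xy kd q n d) \<longleftrightarrow> is_unit d"
  using is_unit_phi_pow_xy[of d n] is_unit_phi_pow_xy[of "phi_pow_xy kd q n d" "- n"]
  by (auto simp: phi_pow_xy_inverse)

lemma irreducible_phi_pow_xy:
  assumes "irreducible d" shows "irreducible (phi_pow_xy kd q n d)"
proof (rule irreducibleI)
  show "phi_pow_xy kd q n d \<noteq> 0" "\<not> is_unit (phi_pow_xy kd q n d)"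
    using assms by (auto simp: is_unit_phi_pow_xy_iff irreducible_def)
  fix x y assume "phi_pow_xy kd q n d = x * y"
  then have "d = phi_pow_xy kd q (- n) x * phi_pow_xy kd q (- n) y"
    by (metis phi_pow_xy_inverse phi_pow_xy_mult)
  with assms show "is_unit x \<or> is_unit y"
    by (auto dest: irreducibleD simp: is_unit_phi_pow_xy_iff)
qed

end

lemma Dy_Fract:
  fixes a b :: "'a::field_char_0 poly fract poly"
  assumes b: "b \<noteq> 0"
  shows "Dy (Fract a b) = Fract (pderiv a * b - a * pderiv b) (b * b)"
  unfolding Dy_def
proof (rule some_Fract_eq[OF b])
  fix a' b' :: "'a poly fract poly" assume b': "b' \<noteq> 0" "Fract a b = Fract a' b'"
  with b have E: "a * b' = a' * b" by (simp add: eq_fract)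
  have E': "a * pderiv b' + b' * pderiv a = a' * pderiv b + b * pderiv a'"
    using arg_cong[OF E, of pderiv] by (simp add: pderiv_mult)
  have "(pderiv a * b - a * pderiv b) * (b' * b') = (pderiv a' * b' - a' * pderiv b') * (b * b)"
    using E E' by algebra
  with b b' show "Fract (pderiv a' * b' - a' * pderiv b') (b' * b') =
      Fract (pderiv a * b - a * pderiv b) (b * b)"
    by (simp add: eq_fract)
qed

lemma Dy_add: "Dy (x + y) = Dy x + Dy y"
proof (cases x, cases y)
  fix a b c d :: "'a::field_char_0 poly fract poly"
  assume x: "x = Fract a b" "b \<noteq> 0" and y: "y = Fract c d" "d \<noteq> 0"
  have "(pderiv (a * d + c * b) * (b * d) - (a * d + c * b) * pderiv (b * d)) * (b * b * (d * d)) =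
        ((pderiv a * b - a * pderiv b) * (d * d) + (pderiv c * d - c * pderiv d) * (b * b)) *
          (b * d * (b * d))"
    by (simp add: pderiv_mult pderiv_add) algebra
  then show ?thesis using x y by (simp add: Dy_Fract eq_fract)
qed

lemma Dy_0 [simp]: "Dy 0 = 0"
  by (subst (1 2) Zero_fract_def) (simp add: Dy_Fract)

lemma Dy_minus: "Dy (- x) = - Dy x"
  using Dy_add[of "- x" x] by (simp add: eq_neg_iff_add_eq_0)

lemma Dy_diff: "Dy (x - y) = Dy x - Dy y"
  by (simp only: diff_conv_add_uminus Dy_add Dy_minus)

context
  fixes kd :: op_kind and q :: "'a::field_char_0"
  assumes q: "q \<noteq> 0"
begin

lemma phi_xy_Fract:
  assumes b: "b \<noteq> 0"
  shows "phi_xy kd q (Fract a b) = Fract (phi_y_pow kd q 1 a) (phi_y_pow kd q 1 b)"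
  unfolding phi_xy_def phi_y_eq_phi_y_pow
proof (rule some_Fract_eq[OF b])
  fix a' b' :: "'a poly fract poly" assume b': "b' \<noteq> 0" "Fract a b = Fract a' b'"
  with b have "phi_y_pow kd q 1 (a * b') = phi_y_pow kd q 1 (a' * b)" by (simp add: eq_fract)
  with b b'(1) show "Fract (phi_y_pow kd q 1 a') (phi_y_pow kd q 1 b') =
      Fract (phi_y_pow kd q 1 a) (phi_y_pow kd q 1 b)"
    by (simp add: eq_fract phi_y_pow_mult q)
qed

lemma phi_xy_add: "phi_xy kd q (x + y) = phi_xy kd q x + phi_xy kd q y"
  by (cases x, cases y) (simp add: q phi_xy_Fract phi_y_pow_mult phi_y_pow_add)

lemma phi_xy_0 [simp]: "phi_xy kd q 0 = 0"
  by (subst (1 2) Zero_fract_def) (simp add: phi_xy_Fract q)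

lemma phi_xy_minus: "phi_xy kd q (- x) = - phi_xy kd q x"
  using phi_xy_add[of "- x" x] by (simp add: eq_neg_iff_add_eq_0)

lemma phi_xy_diff: "phi_xy kd q (x - y) = phi_xy kd q x - phi_xy kd q y"
  by (simp only: diff_conv_add_uminus phi_xy_add phi_xy_minus)

lemma phi_xy_sum: "phi_xy kd q (sum f A) = (\<Sum>i\<in>A. phi_xy kd q (f i))"
  by (induction A rule: infinite_finite_induct) (simp_all add: phi_xy_add)

lemma Dy_phi_xy: "Dy (phi_xy kd q x) = phi_xy kd q (Dy x)"
  by (cases x) (simp add: q phi_xy_Fract Dy_Fract phi_y_pow_mult phi_y_pow_add phi_y_pow_diff
      pderiv_phi_y_pow)

lemma funpow_phi_xy_Fract:
  assumes b: "b \<noteq> 0"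
  shows "(phi_xy kd q ^^ j) (Fract a b) = Fract (phi_y_pow kd q (int j) a) (phi_y_pow kd q (int j) b)"
  by (induction j) (simp_all add: q b phi_xy_Fract phi_y_pow_phi_y_pow add.commute)

lemma funpow_phi_xy_add: "(phi_xy kd q ^^ j) (x + y) = (phi_xy kd q ^^ j) x + (phi_xy kd q ^^ j) y"
  by (induction j) (simp_all add: phi_xy_add)

lemma funpow_phi_xy_diff: "(phi_xy kd q ^^ j) (x - y) = (phi_xy kd q ^^ j) x - (phi_xy kd q ^^ j) y"
  by (induction j) (simp_all add: phi_xy_diff)

lemma funpow_phi_xy_Dy: "(phi_xy kd q ^^ j) (Dy x) = Dy ((phi_xy kd q ^^ j) x)"
  by (induction j) (simp_all add: Dy_phi_xy)

end

lemma prime_elem_degree_pos: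
  fixes p :: "'b::field poly"
  assumes "prime_elem p" shows "degree p > 0"
  using assms is_unit_iff_degree[of p] prime_elem_not_unit[of p] by (auto simp: prime_elem_def)

lemma prime_elem_bezout:
  fixes p B :: "'b::field poly"
  assumes p: "prime_elem p" and nd: "\<not> p dvd B"
  shows "\<exists>s t. s * p + t * B = 1"
proof -
  define I where "I = {g. \<exists>s t. g = s * p + t * B}"
  have "B = 0 * p + 1 * B" "p = 1 * p + 0 * B" by simp_all
  then have BI: "B \<in> I" and pI: "p \<in> I" unfolding I_def by blast+
  have "B \<noteq> 0" using nd by auto
  with BI obtain g where g: "g \<in> I" "g \<noteq> 0"
    and min: "\<forall>g'. g' \<in> I \<and> g' \<noteq> 0 \<longrightarrow> degree g \<le> degree g'"
    using ex_has_least_nat[of "\<lambda>g. g \<in> I \<and> g \<noteq> 0" B degree] by auto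
  have g_dvd: "g dvd x" if "x \<in> I" for x
  proof (rule ccontr)
    assume "\<not> g dvd x"
    then have "x mod g \<noteq> 0" by (simp add: mod_eq_0_iff_dvd)
    moreover from that g(1) obtain s t s' t' where "x = s * p + t * B" "g = s' * p + t' * B"
      unfolding I_def by blast
    then have "x mod g = (s - x div g * s') * p + (t - x div g * t') * B"
      by (simp add: minus_div_mult_eq_mod[symmetric] algebra_simps)
    then have "x mod g \<in> I" unfolding I_def by blast
    ultimately have "degree g \<le> degree (x mod g)" using min by blast
    with degree_mod_less'[OF g(2) \<open>x mod g \<noteq> 0\<close>] show False by simp
  qed
  from g_dvd[OF pI] obtain h where h: "p = g * h" by (elim dvdE)
  have "\<not> is_unit h"
  proof
    assume "is_unit h"
    then have "p dvd g" using h by simp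
    with g_dvd[OF BI] nd show False by (blast intro: dvd_trans)
  qed
  with h prime_elem_imp_irreducible[OF p] have "is_unit g" by (auto dest: irreducibleD)
  then obtain v where v: "1 = g * v" by (elim dvdE)
  from g(1) obtain s t where "g = s * p + t * B" unfolding I_def by blast
  with v have "(v * s) * p + (v * t) * B = 1" by (simp add: algebra_simps)
  then show ?thesis by blast
qed

lemma prime_power_factor_exists:
  fixes p B :: "'b::field poly"
  assumes p: "prime_elem p" and B: "B \<noteq> 0"
  shows "\<exists>e B0. B = p ^ e * B0 \<and> \<not> p dvd B0"
  using B
proof (induction "degree B" arbitrary: B rule: less_induct)
  case less
  show ?case
  proof (cases "p dvd B")
    case True
    then obtain B1 where B1: "B = p * B1" by (elim dvdE)
    with less.prems have "B1 \<noteq> 0" "degree B = degree p + degree B1"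
      by (auto simp: degree_mult_eq)
    with prime_elem_degree_pos[OF p] less.hyps[of B1] obtain e B0
      where "B1 = p ^ e * B0" "\<not> p dvd B0"
      by auto
    with B1 have "B = p ^ Suc e * B0 \<and> \<not> p dvd B0" by (simp add: mult.assoc)
    then show ?thesis by blast
  qed (intro exI[of _ 0] exI[of _ B], simp)
qed

lemma prime_elem_divisor_exists:
  fixes f :: "'b::field poly"
  assumes "degree f > 0"
  shows "\<exists>\<pi>. prime_elem \<pi> \<and> \<pi> dvd f"
  using assms
proof (induction "degree f" arbitrary: f rule: less_induct)
  case less
  show ?case
  proof (cases "irreducible f")
    case False
    have "f \<noteq> 0" "\<not> is_unit f" using less.prems by (auto simp: is_unit_poly_iff)
    with False obtain g h where gh: "f = g * h" "\<not> is_unit g" "\<not> is_unit h"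
      unfolding irreducible_def by blast
    then have "g \<noteq> 0" "h \<noteq> 0" using \<open>f \<noteq> 0\<close> by auto
    with gh have "degree g > 0" "degree h > 0" by (auto simp: is_unit_iff_degree)
    moreover have "degree f = degree g + degree h"
      using gh \<open>g \<noteq> 0\<close> \<open>h \<noteq> 0\<close> by (simp add: degree_mult_eq)
    ultimately obtain \<pi> where "prime_elem \<pi>" "\<pi> dvd g" using less.hyps[of g] by auto
    moreover from \<open>\<pi> dvd g\<close> have "\<pi> dvd f" unfolding gh(1) by (rule dvd_mult2)
    ultimately show ?thesis by blast
  next
    case True
    then have "prime_elem f" by (rule field_poly_irreducible_imp_prime)
    then show ?thesis by (intro exI[of _ f]) simp
  qed
qed

section \<open>Gauss's lemma for k[x][y]\<close>

lemma fract_poly_clear_denominators: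
  fixes A :: "'b::idom fract poly"
  shows "\<exists>D A'. D \<noteq> 0 \<and> smult (to_fract D) A = fract_poly A'"
proof (induction A)
  case (pCons r A)
  then obtain D A' where DA: "D \<noteq> 0" "smult (to_fract D) A = fract_poly A'" by blast
  obtain a b where r: "r = Fract a b" "b \<noteq> 0" by (cases r)
  then have "to_fract (D * b) * r = to_fract (D * a)" by (simp add: to_fract_def eq_fract)
  moreover have "smult (to_fract (D * b)) A = smult (to_fract b) (smult (to_fract D) A)"
    by (simp add: mult.commute)
  ultimately have "smult (to_fract (D * b)) (pCons r A) = fract_poly (pCons (D * a) (smult b A'))"
    using DA(2) by (simp add: map_poly_pCons)
  with DA r show ?case by (intro exI[of _ "D * b"]) auto
qed (intro exI[of _ 1] exI[of _ 0], simp)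

lemma smult_eq_mult_imp_factorization:
  fixes P :: "'b::field poly poly"
  shows "c \<noteq> 0 \<Longrightarrow> smult c P = A * B \<Longrightarrow>
    \<exists>A' B'. P = A' * B' \<and> degree A' = degree A \<and> degree B' = degree B"
proof (induction "degree c" arbitrary: c A B rule: less_induct)
  case less
  show ?case
  proof (cases "degree c = 0")
    case True
    then obtain c0 where c0: "c = [:c0:]" "c0 \<noteq> 0" using less.prems by (auto elim: degree_eq_zeroE)
    then have "P = smult [:inverse c0:] A * B"
      using arg_cong[OF less.prems(2), of "smult [:inverse c0:]"] by (simp add: one_pCons[symmetric])
    moreover have "degree (smult [:inverse c0:] A) = degree A" using c0 by simp
    ultimately show ?thesis by blast
  next
    case False
    with prime_elem_divisor_exists[of c] obtain \<pi> c1 where pi: "prime_elem \<pi>" and c1: "c = \<pi> * c1"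
      unfolding dvd_def by auto
    then have "\<pi> \<noteq> 0" "c1 \<noteq> 0" using less.prems by auto
    with prime_elem_degree_pos[OF pi] c1 have lt: "degree c1 < degree c" by (simp add: degree_mult_eq)
    have "A * B = [:\<pi>:] * smult c1 P" using less.prems(2) c1 by (simp add: mult.commute)
    then have "[:\<pi>:] dvd A * B" by (rule dvdI)
    with pi have "[:\<pi>:] dvd A \<or> [:\<pi>:] dvd B"
      by (simp add: prime_elem_dvd_mult_iff prime_elem_const_poly_iff)
    then show ?thesis
    proof
      assume "[:\<pi>:] dvd A"
      then obtain A1 where A1: "A = [:\<pi>:] * A1" by (elim dvdE)
      with less.prems(2) c1 have "smult \<pi> (smult c1 P) = smult \<pi> (A1 * B)" by simp
      then have "smult c1 P = A1 * B" by (rule smult_cancel[OF \<open>\<pi> \<noteq> 0\<close>])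
      then obtain A' B' where "P = A' * B'" "degree A' = degree A1" "degree B' = degree B"
        using less.hyps[OF lt \<open>c1 \<noteq> 0\<close>] by blast
      with A1 \<open>\<pi> \<noteq> 0\<close> show ?thesis by auto
    next
      assume "[:\<pi>:] dvd B"
      then obtain B1 where B1: "B = [:\<pi>:] * B1" by (elim dvdE)
      with less.prems(2) c1 have "smult \<pi> (smult c1 P) = smult \<pi> (A * B1)"
        by (simp add: mult.left_commute)
      then have "smult c1 P = A * B1" by (rule smult_cancel[OF \<open>\<pi> \<noteq> 0\<close>])
      then obtain A' B' where "P = A' * B'" "degree A' = degree A" "degree B' = degree B1"
        using less.hyps[OF lt \<open>c1 \<noteq> 0\<close>] by blast
      with B1 \<open>\<pi> \<noteq> 0\<close> show ?thesis by auto
    qed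
  qed
qed


lemma irreducible_fract_poly:
  fixes P :: "'b::field poly poly"
  assumes P: "irreducible P" "degree P > 0"
  shows "irreducible (fract_poly P)"
proof (rule irreducibleI)
  have dg: "degree (fract_poly P) = degree P" by (simp add: degree_map_poly)
  show nz: "fract_poly P \<noteq> 0" using P by auto
  show "\<not> is_unit (fract_poly P)" using dg P is_unit_iff_degree[OF nz] by simp
  fix A B assume AB: "fract_poly P = A * B"
  obtain D1 A1 where A1: "D1 \<noteq> 0" "smult (to_fract D1) A = fract_poly A1"
    using fract_poly_clear_denominators by blast
  obtain D2 B1 where B1: "D2 \<noteq> 0" "smult (to_fract D2) B = fract_poly B1"
    using fract_poly_clear_denominators by blast
  have "fract_poly (smult (D1 * D2) P) = smult (to_fract D1) A * smult (to_fract D2) B"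
    using AB by (simp add: mult_ac)
  also have "\<dots> = fract_poly (A1 * B1)" using A1 B1 by simp
  finally have "smult (D1 * D2) P = A1 * B1" by (simp only: fract_poly_eq_iff)
  with A1(1) B1(1) obtain A2 B2 where AB2: "P = A2 * B2" "degree A2 = degree A1" "degree B2 = degree B1"
    using smult_eq_mult_imp_factorization[of "D1 * D2" P A1 B1] by auto
  have "degree A1 = degree A" "degree B1 = degree B"
    using arg_cong[OF A1(2), of degree] arg_cong[OF B1(2), of degree] A1(1) B1(1)
    by (simp_all add: degree_map_poly)
  moreover from P(1) AB2(1) have "is_unit A2 \<or> is_unit B2" by (rule irreducibleD)
  ultimately have "degree A = 0 \<or> degree B = 0" using AB2 by (auto simp: is_unit_poly_iff)
  moreover have "A \<noteq> 0" "B \<noteq> 0" using AB nz by auto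
  ultimately show "is_unit A \<or> is_unit B" using is_unit_iff_degree by blast
qed

lemma irreducible_not_const_dvd:
  fixes P :: "'b::field poly poly"
  assumes P: "irreducible P" "degree P > 0" and c: "\<not> is_unit c"
  shows "\<not> [:c:] dvd P"
proof
  assume "[:c:] dvd P"
  then obtain P' where P': "P = [:c:] * P'" by (elim dvdE)
  with P(1) have "is_unit [:c:] \<or> is_unit P'" by (rule irreducibleD)
  with c have "is_unit P'" by (simp add: is_unit_const_poly_iff)
  then have "degree P' = 0" by (auto simp: is_unit_poly_iff)
  with P' P(2) degree_mult_le[of "[:c:]" P'] show False by simp
qed

lemma prime_dvd_if_const_dvd_smult_irreducible:
  fixes S :: "'b::field poly poly"
  assumes pi: "prime_elem \<pi>" and S: "irreducible S" "degree S > 0" and dvd: "[:\<pi>:] dvd smult y S"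
  shows "\<pi> dvd y"
proof -
  have "prime_elem [:\<pi>:]" using pi by (simp add: prime_elem_const_poly_iff)
  moreover from dvd have "[:\<pi>:] dvd [:y:] * S" by simp
  moreover have "\<not> [:\<pi>:] dvd S" using S pi by (simp add: irreducible_not_const_dvd)
  ultimately have "[:\<pi>:] dvd [:y:]" using prime_elem_dvd_multD[of "[:\<pi>:]" "[:y:]" S] by blast
  then show ?thesis by simp
qed

lemma smult_eq_smult_irreducible:
  fixes P Q :: "'b::field poly poly"
  assumes P: "irreducible P" "degree P > 0" and Q: "irreducible Q" "degree Q > 0"
  shows "a \<noteq> 0 \<Longrightarrow> b \<noteq> 0 \<Longrightarrow> smult b Q = smult a P \<Longrightarrow> \<exists>c. c \<noteq> 0 \<and> Q = smult [:c:] P"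
proof (induction "degree a + degree b" arbitrary: a b rule: less_induct)
  case less
  show ?case
  proof (cases "degree a = 0 \<and> degree b = 0")
    case True
    with less.prems obtain a0 b0 where "a = [:a0:]" "b = [:b0:]" "a0 \<noteq> 0" "b0 \<noteq> 0"
      by (auto elim!: degree_eq_zeroE)
    have "Q = smult [:inverse b0:] (smult b Q)" using \<open>b = [:b0:]\<close> \<open>b0 \<noteq> 0\<close>
      by (simp add: one_pCons[symmetric])
    also have "\<dots> = smult [:inverse b0 * a0:] P"
      using less.prems(3) \<open>a = [:a0:]\<close> by (simp add: mult.commute)
    finally have "Q = smult [:inverse b0 * a0:] P" .
    with \<open>a0 \<noteq> 0\<close> \<open>b0 \<noteq> 0\<close> show ?thesis by (intro exI[of _ "inverse b0 * a0"]) simp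
  next
    case False
    then have "degree (a * b) > 0" using less.prems(1,2) by (simp add: degree_mult_eq)
    then obtain \<pi> where pi: "prime_elem \<pi>" "\<pi> dvd a * b"
      using prime_elem_divisor_exists by blast
    have "[:\<pi>:] dvd smult x R" if "\<pi> dvd x" for x and R :: "'b poly poly"
      using that by (simp add: const_poly_dvd_iff dvd_mult2)
    with pi(1) less.prems(3) P Q have "\<pi> dvd a \<longleftrightarrow> \<pi> dvd b"
      by (metis prime_dvd_if_const_dvd_smult_irreducible)
    with pi have "\<pi> dvd a \<and> \<pi> dvd b" by (auto simp: prime_elem_dvd_mult_iff)
    then obtain a1 b1 where ab1: "a = \<pi> * a1" "b = \<pi> * b1" unfolding dvd_def by blast
    have "\<pi> \<noteq> 0" "a1 \<noteq> 0" "b1 \<noteq> 0" using ab1 less.prems(1,2) by auto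
    with ab1 prime_elem_degree_pos[OF pi(1)] have "degree a1 + degree b1 < degree a + degree b"
      by (simp add: degree_mult_eq)
    moreover have "smult \<pi> (smult b1 Q) = smult \<pi> (smult a1 P)" using less.prems(3) ab1 by simp
    then have "smult b1 Q = smult a1 P" by (rule smult_cancel[OF \<open>\<pi> \<noteq> 0\<close>])
    ultimately show ?thesis using less.hyps \<open>a1 \<noteq> 0\<close> \<open>b1 \<noteq> 0\<close> by blast
  qed
qed

lemma fract_poly_dvd_irreducible_imp_smult:
  fixes P Q :: "'b::field poly poly"
  assumes P: "irreducible P" "degree P > 0" and Q: "irreducible Q" "degree Q > 0"
    and dvd: "fract_poly P dvd fract_poly Q"
  shows "\<exists>c. c \<noteq> 0 \<and> Q = smult [:c:] P"
proof -
  from dvd obtain A where A: "fract_poly Q = fract_poly P * A" by (elim dvdE)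
  with irreducible_fract_poly[OF Q] irreducible_fract_poly[OF P] have "is_unit A"
    by (auto dest: irreducibleD simp: irreducible_def)
  then obtain r where r: "A = [:r:]" "r dvd 1" by (auto simp: is_unit_poly_iff)
  obtain a b where ab: "r = Fract a b" "b \<noteq> 0" by (cases r)
  with r have "a \<noteq> 0" by (auto simp: Fract_conv_to_fract)
  have "to_fract b * r = to_fract a" using ab by (simp add: to_fract_def eq_fract)
  then have "fract_poly (smult b Q) = fract_poly (smult a P)"
    using A r by (simp add: mult.commute)
  then have "smult b Q = smult a P" by (simp only: fract_poly_eq_iff)
  with smult_eq_smult_irreducible[OF P Q \<open>a \<noteq> 0\<close> ab(2)] show ?thesis by blast
qed


section \<open>Polynomials in k[x,y] that are periodic under phi\<close>

lemma power_int_eq_1_imp_zero: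
  fixes q :: "'b::field"
  assumes nr: "\<forall>n::nat. n > 0 \<longrightarrow> q ^ n \<noteq> 1" and K: "q powi K = 1"
  shows "K = 0"
proof (cases K rule: int_cases3)
  case (pos n)
  with K nr show ?thesis by simp
next
  case (neg n)
  with K have "inverse (q ^ n) = 1" by (simp add: power_int_minus)
  then have "q ^ n = 1" by (metis inverse_1 inverse_inverse_eq)
  with nr neg show ?thesis by simp
qed simp

lemma power_power_int_inj:
  fixes q :: "'b::field"
  assumes q: "q \<noteq> 0" and nr: "\<forall>n::nat. n > 0 \<longrightarrow> q ^ n \<noteq> 1" and N: "N \<noteq> 0"
    and eq: "(q powi N) ^ i1 = (q powi N) ^ i2"
  shows "i1 = i2"
proof -
  have "q powi (N * int i1 - N * int i2) = 1"
    using eq q by (simp add: power_int_diff power_int_mult flip: power_int_of_nat)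
  then have "N * int i1 - N * int i2 = 0" by (rule power_int_eq_1_imp_zero[OF nr])
  with N show ?thesis by (simp flip: right_diff_distrib)
qed

lemma pcompose_shift_invariant_imp_const:
  fixes f :: "'b::field_char_0 poly"
  assumes N: "N \<noteq> 0" and inv: "pcompose f [:of_int N, 1:] = f"
  shows "degree f = 0"
proof -
  have step: "poly f (of_int N + x) = poly f x" for x
    using arg_cong[OF inv, of "\<lambda>g. poly g x"] by (simp add: poly_pcompose)
  have "poly f (of_int (N * int k)) = poly f 0" for k
  proof (induction k)
    case (Suc k)
    have "of_int (N * int (Suc k)) = of_int N + (of_int (N * int k) :: 'b)" by (simp add: algebra_simps)
    with step Suc show ?case by simp
  qed simp
  then have "range (\<lambda>k. of_int (N * int k) :: 'b) \<subseteq> {x. poly (f - [:poly f 0:]) x = 0}" by auto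
  moreover have "infinite (range (\<lambda>k. of_int (N * int k) :: 'b))"
    by (rule range_inj_infinite) (use N in \<open>auto simp: inj_def\<close>)
  ultimately have "infinite {x. poly (f - [:poly f 0:]) x = 0}" using finite_subset by blast
  then have "f - [:poly f 0:] = 0" using poly_roots_finite by blast
  then have "f = [:poly f 0:]" by (simp only: right_minus_eq)
  then have "degree f = degree [:poly f 0:]" by (rule arg_cong)
  then show ?thesis by (simp only: degree_pCons_0)
qed

lemma shift_periodic_imp_const_coeffs:
  fixes d :: "'b::field_char_0 poly poly"
  assumes N: "N \<noteq> 0" and "d \<noteq> 0"
    and per: "\<And>j. pcompose (coeff d j) [:of_int N, 1:] = smult c (coeff d j)"
  shows "\<forall>j. degree (coeff d j) = 0"
proof -
  let ?f = "lead_coeff d"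
  have "lead_coeff ?f = lead_coeff (pcompose ?f [:of_int N, 1:])" by (simp add: lead_coeff_comp)
  also have "\<dots> = c * lead_coeff ?f" by (simp only: per lead_coeff_smult)
  finally have "c = 1" using \<open>d \<noteq> 0\<close> by simp
  show ?thesis
  proof
    fix j
    from per[of j] \<open>c = 1\<close> have "pcompose (coeff d j) [:of_int N, 1:] = coeff d j" by simp
    with N show "degree (coeff d j) = 0" by (rule pcompose_shift_invariant_imp_const)
  qed
qed

lemma scaling_periodic_imp_const_coeffs:
  fixes d :: "'b::field poly poly"
  assumes irr: "irreducible d" and dg: "degree d > 0"
    and a_inj: "\<And>i1 i2. a ^ i1 = a ^ i2 \<Longrightarrow> i1 = i2"
    and per: "\<And>j. pcompose (coeff d j) [:0, a:] = smult c (coeff d j)"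
  shows "\<forall>j. degree (coeff d j) = 0"
proof -
  have ceq: "a ^ i * coeff (coeff d j) i = c * coeff (coeff d j) i" for i j
    using arg_cong[OF per[of j], of "\<lambda>g. coeff g i"] by (simp add: coeff_pcompose_linear)
  have "d \<noteq> 0" using irr by auto
  define i0 where "i0 = degree (coeff d (degree d))"
  from \<open>d \<noteq> 0\<close> have "coeff (coeff d (degree d)) i0 \<noteq> 0" by (simp add: i0_def)
  with ceq[of i0 "degree d"] have "a ^ i0 = c" by simp
  have only_i0: "coeff (coeff d j) i = 0" if "i \<noteq> i0" for i j
  proof (rule ccontr)
    assume "coeff (coeff d j) i \<noteq> 0"
    with ceq[of i j] \<open>a ^ i0 = c\<close> have "a ^ i = a ^ i0" by simp
    with a_inj that show False by blast
  qed
  define e where "e = map_poly (\<lambda>f. [:coeff f i0:]) d"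
  have "coeff d j = monom (coeff (coeff d j) i0) i0" for j
    by (rule poly_eqI) (auto simp: coeff_monom only_i0)
  then have d_eq: "d = [:monom 1 i0:] * e"
    by (intro poly_eqI) (simp add: e_def coeff_map_poly smult_monom)
  with \<open>d \<noteq> 0\<close> have "degree e = degree d" by (simp add: degree_mult_eq)
  with dg have "\<not> is_unit e" by (auto simp: is_unit_poly_iff)
  with irreducibleD[OF irr d_eq] have "is_unit (monom (1::'b) i0)"
    by (simp add: is_unit_const_poly_iff)
  then have "degree (monom (1::'b) i0) = 0" by (auto simp: is_unit_poly_iff)
  then have "i0 = 0" by (simp add: degree_monom_eq)
  show ?thesis
  proof
    fix j
    have "degree (coeff d j) \<le> 0" by (rule degree_le) (use only_i0 \<open>i0 = 0\<close> in auto)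
    then show "degree (coeff d j) = 0" by simp
  qed
qed


section \<open>Fractions regular at a prime of k(x)[y]\<close>

definition regular_at :: "'a::field_char_0 poly fract poly \<Rightarrow> 'a poly fract poly fract set" where
  "regular_at s = {Fract X Y | X Y. Y \<noteq> 0 \<and> \<not> s dvd Y}"

definition regular_mod_Dy :: "'a::field_char_0 poly fract poly \<Rightarrow> 'a poly fract poly fract set" where
  "regular_mod_Dy s = {Dy H + w | H w. w \<in> regular_at s}"

lemma Fract_in_regular_at: "Y \<noteq> 0 \<Longrightarrow> \<not> s dvd Y \<Longrightarrow> Fract X Y \<in> regular_at s"
  unfolding regular_at_def by blast

lemma regular_atE:
  assumes "u \<in> regular_at s"
  obtains X Y where "u = Fract X Y" "Y \<noteq> 0" "\<not> s dvd Y"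
  using assms unfolding regular_at_def by blast

lemma regular_mod_DyI: "w \<in> regular_at s \<Longrightarrow> Dy H + w \<in> regular_mod_Dy s"
  unfolding regular_mod_Dy_def by blast

lemma regular_mod_DyE:
  assumes "u \<in> regular_mod_Dy s"
  obtains H w where "u = Dy H + w" "w \<in> regular_at s"
  using assms unfolding regular_mod_Dy_def by blast

lemma Fract_in_regular_at_imp_dvd:
  assumes "prime_elem p" "Fract c p \<in> regular_at p"
  shows "p dvd c"
proof -
  from assms(2) obtain X Y where "Y \<noteq> 0" "\<not> p dvd Y" "Fract c p = Fract X Y"
    unfolding regular_at_def by blast
  moreover have "p \<noteq> 0" using assms(1) by auto
  ultimately have "c * Y = X * p" by (simp add: eq_fract)
  then have "p dvd c * Y" by simp
  with assms(1) \<open>\<not> p dvd Y\<close> show ?thesis by (simp add: prime_elem_dvd_mult_iff)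
qed

context
  fixes s :: "'a::field_char_0 poly fract poly"
  assumes s: "prime_elem s"
begin

lemma zero_in_regular_at: "0 \<in> regular_at s"
  using Fract_in_regular_at[of 1 s 0] s by (simp add: prime_elem_not_unit Zero_fract_def)

lemma regular_at_add:
  assumes "u \<in> regular_at s" "v \<in> regular_at s" shows "u + v \<in> regular_at s"
proof -
  from assms obtain X Y X' Y' where "u = Fract X Y" "v = Fract X' Y'"
    and "Y \<noteq> 0" "\<not> s dvd Y" "Y' \<noteq> 0" "\<not> s dvd Y'"
    by (elim regular_atE)
  with s show ?thesis
    using Fract_in_regular_at[of "Y * Y'" s "X * Y' + X' * Y"] by (simp add: prime_elem_dvd_mult_iff)
qed

lemma regular_at_minus: "u \<in> regular_at s \<Longrightarrow> - u \<in> regular_at s"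
  by (elim regular_atE) (simp add: Fract_in_regular_at)

lemma regular_at_sum: "(\<And>i. i \<in> A \<Longrightarrow> f i \<in> regular_at s) \<Longrightarrow> sum f A \<in> regular_at s"
  by (induction A rule: infinite_finite_induct) (simp_all add: zero_in_regular_at regular_at_add)

lemma regular_at_subset_regular_mod_Dy: "regular_at s \<subseteq> regular_mod_Dy s"
  using regular_mod_DyI[of _ s 0] by auto

lemma Dy_in_regular_mod_Dy: "Dy H \<in> regular_mod_Dy s"
  using regular_mod_DyI[OF zero_in_regular_at, of H] by simp

lemma zero_in_regular_mod_Dy: "0 \<in> regular_mod_Dy s"
  using Dy_in_regular_mod_Dy[of 0] by simp

lemma regular_mod_Dy_add:
  assumes "u \<in> regular_mod_Dy s" "v \<in> regular_mod_Dy s" shows "u + v \<in> regular_mod_Dy s"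
proof -
  from assms obtain H1 w1 H2 w2 where
    "u = Dy H1 + w1" "w1 \<in> regular_at s" "v = Dy H2 + w2" "w2 \<in> regular_at s"
    by (elim regular_mod_DyE)
  then have "u + v = Dy (H1 + H2) + (w1 + w2)" by (simp add: Dy_add)
  also have "\<dots> \<in> regular_mod_Dy s" by (intro regular_mod_DyI regular_at_add) fact+
  finally show ?thesis .
qed

lemma regular_mod_Dy_minus:
  assumes "u \<in> regular_mod_Dy s" shows "- u \<in> regular_mod_Dy s"
proof -
  from assms obtain H w where "u = Dy H + w" "w \<in> regular_at s" by (elim regular_mod_DyE)
  then have "- u = Dy (- H) + (- w)" by (simp add: Dy_minus)
  also have "\<dots> \<in> regular_mod_Dy s" by (intro regular_mod_DyI regular_at_minus) fact
  finally show ?thesis .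
qed

lemma regular_mod_Dy_diff: "u \<in> regular_mod_Dy s \<Longrightarrow> v \<in> regular_mod_Dy s \<Longrightarrow> u - v \<in> regular_mod_Dy s"
  unfolding diff_conv_add_uminus by (intro regular_mod_Dy_add regular_mod_Dy_minus)

lemma regular_mod_Dy_sum:
  "(\<And>i. i \<in> A \<Longrightarrow> f i \<in> regular_mod_Dy s) \<Longrightarrow> sum f A \<in> regular_mod_Dy s"
  by (induction A rule: infinite_finite_induct) (simp_all add: zero_in_regular_mod_Dy regular_mod_Dy_add)

end

context
  fixes kd :: op_kind and q :: "'a::field_char_0"
  assumes q: "q \<noteq> 0"
begin

lemma funpow_phi_xy_regular_at:
  assumes "u \<in> regular_at s"
  shows "(phi_xy kd q ^^ j) u \<in> regular_at (phi_y_pow kd q (int j) s)"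
  using assms
proof (rule regular_atE)
  fix X Y assume "u = Fract X Y" "Y \<noteq> 0" "\<not> s dvd Y"
  then show ?thesis
    by (simp add: q funpow_phi_xy_Fract phi_y_pow_dvd_iff Fract_in_regular_at)
qed

lemma funpow_phi_xy_regular_mod_Dy:
  assumes "u \<in> regular_mod_Dy s"
  shows "(phi_xy kd q ^^ j) u \<in> regular_mod_Dy (phi_y_pow kd q (int j) s)"
proof -
  from assms obtain H w where "u = Dy H + w" "w \<in> regular_at s" by (elim regular_mod_DyE)
  then have "(phi_xy kd q ^^ j) u = Dy ((phi_xy kd q ^^ j) H) + (phi_xy kd q ^^ j) w"
    by (simp add: q funpow_phi_xy_add funpow_phi_xy_Dy)
  also have "\<dots> \<in> regular_mod_Dy (phi_y_pow kd q (int j) s)"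
    by (intro regular_mod_DyI funpow_phi_xy_regular_at) fact
  finally show ?thesis .
qed

end


section \<open>Simple poles modulo derivatives: Hermite reduction\<close>

lemma of_nat_Suc_fract_poly_neq_0: "(of_nat (Suc k) :: 'a::field_char_0 poly fract) \<noteq> 0"
proof -
  have "(of_nat (Suc k) :: 'a poly) \<noteq> 0" by (simp add: of_nat_poly del: of_nat_Suc)
  then show ?thesis by (simp add: of_nat_fract Zero_fract_def eq_fract del: of_nat_Suc)
qed

lemma not_dvd_pderiv:
  fixes p :: "'a::field_char_0 poly fract poly"
  assumes deg: "degree p > 0"
  shows "\<not> p dvd pderiv p"
proof
  assume dvd: "p dvd pderiv p"
  obtain m where m: "degree p = Suc m" using deg by (cases "degree p") auto
  have "coeff (pderiv p) m = of_nat (Suc m) * lead_coeff p"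
    by (simp add: coeff_pderiv m del: of_nat_Suc)
  with deg of_nat_Suc_fract_poly_neq_0[of m] have "pderiv p \<noteq> 0"
    by (auto simp del: of_nat_Suc)
  with dvd have "degree p \<le> degree (pderiv p)" by (rule dvd_imp_degree_le)
  moreover have "degree (pderiv p) \<le> m"
    by (rule degree_le) (simp add: coeff_pderiv coeff_eq_0 m)
  ultimately show False using m by simp
qed

context
  fixes p :: "'a::field_char_0 poly fract poly"
  assumes p: "prime_elem p" and p_sep: "\<not> p dvd pderiv p"
begin

lemma p_neq_0: "p \<noteq> 0" using p by auto

lemma Fract_reduced_at_prime:
  assumes "B \<noteq> 0"
  shows "\<exists>A' e B0. Fract A B = Fract A' (p ^ e * B0) \<and> B0 \<noteq> 0 \<and> \<not> p dvd B0 \<and>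
    (e = 0 \<or> \<not> p dvd A')"
proof -
  obtain e B0 where B: "B = p ^ e * B0" "\<not> p dvd B0"
    using prime_power_factor_exists[OF p assms] by blast
  with assms have "B0 \<noteq> 0" by auto
  have "\<exists>A' e'. Fract A (p ^ e * B0) = Fract A' (p ^ e' * B0) \<and> (e' = 0 \<or> \<not> p dvd A')" for A
  proof (induction e arbitrary: A)
    case (Suc k)
    show ?case
    proof (cases "p dvd A")
      case True
      then obtain A1 where "A = p * A1" by (elim dvdE)
      then have "Fract A (p ^ Suc k * B0) = Fract A1 (p ^ k * B0)"
        using mult_fract_cancel[OF p_neq_0, of A1 "p ^ k * B0"] by (simp add: mult.assoc)
      with Suc.IH[of A1] show ?thesis by auto
    qed blast
  qed blast
  with B \<open>B0 \<noteq> 0\<close> show ?thesis by blast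
qed

(* A derivative has no simple pole: differentiating raises the order of a pole by exactly one,
   because p is separable and the characteristic is zero. *)
lemma Dy_Fract_pole_order:
  assumes B0: "B0 \<noteq> 0" "\<not> p dvd B0" and A: "\<not> p dvd A"
  shows "\<exists>M. \<not> p dvd M \<and> Dy (Fract A (p ^ Suc k * B0)) = Fract M (p ^ Suc (Suc k) * (B0 * B0))"
proof -
  define C where "C = [:of_nat (Suc k) :: 'a poly fract:]"
  define M where "M = p * pderiv A * B0 - A * p * pderiv B0 - C * (A * B0 * pderiv p)"
  have dB: "pderiv (p ^ Suc k * B0) = p ^ Suc k * pderiv B0 + B0 * (C * p ^ k * pderiv p)"
    by (simp add: pderiv_mult pderiv_power_Suc C_def del: of_nat_Suc power_Suc)
  have num: "pderiv A * (p ^ Suc k * B0) - A * pderiv (p ^ Suc k * B0) = p ^ k * M"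
    unfolding dB M_def by (simp add: algebra_simps)
  have sq: "p ^ Suc k * B0 * (p ^ Suc k * B0) = p ^ k * (p ^ Suc (Suc k) * (B0 * B0))"
    by (simp add: algebra_simps)
  have "p ^ Suc k * B0 \<noteq> 0" using B0 p_neq_0 by simp
  then have "Dy (Fract A (p ^ Suc k * B0)) =
      Fract (pderiv A * (p ^ Suc k * B0) - A * pderiv (p ^ Suc k * B0)) (p ^ Suc k * B0 * (p ^ Suc k * B0))"
    by (rule Dy_Fract)
  also have "\<dots> = Fract (p ^ k * M) (p ^ k * (p ^ Suc (Suc k) * (B0 * B0)))"
    by (simp only: num sq)
  also have "\<dots> = Fract M (p ^ Suc (Suc k) * (B0 * B0))"
    using p_neq_0 by (simp add: mult_fract_cancel)
  finally have Dy_eq: "Dy (Fract A (p ^ Suc k * B0)) = Fract M (p ^ Suc (Suc k) * (B0 * B0))" .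
  have "\<not> p dvd M"
  proof
    assume "p dvd M"
    moreover have "p dvd p * pderiv A * B0 - A * p * pderiv B0" by (simp add: algebra_simps)
    moreover have "C * (A * B0 * pderiv p) = (p * pderiv A * B0 - A * p * pderiv B0) - M"
      unfolding M_def by simp
    ultimately have "p dvd C * (A * B0 * pderiv p)" by (simp add: dvd_diff)
    moreover have "is_unit C"
      using of_nat_Suc_fract_poly_neq_0[of k] by (simp add: C_def is_unit_const_poly_iff dvd_field_iff del: of_nat_Suc)
    ultimately have "p dvd A * B0 * pderiv p" using dvd_mult_unit_iff' by blast
    with p A B0 p_sep show False by (simp add: prime_elem_dvd_mult_iff)
  qed
  with Dy_eq show ?thesis by blast
qed

lemma dvd_if_simple_pole_in_regular_mod_Dy:
  assumes "Fract c p \<in> regular_mod_Dy p"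
  shows "p dvd c"
proof -
  from assms obtain H X Y where Hw: "Fract c p = Dy H + Fract X Y" and Y: "Y \<noteq> 0" "\<not> p dvd Y"
    by (auto elim!: regular_mod_DyE regular_atE)
  obtain A0 B where "H = Fract A0 B" "B \<noteq> 0" by (cases H)
  with Fract_reduced_at_prime obtain A e B0 where H: "H = Fract A (p ^ e * B0)"
    and B0: "B0 \<noteq> 0" "\<not> p dvd B0" and e: "e = 0 \<or> \<not> p dvd A"
    by blast
  show ?thesis
  proof (cases e)
    case 0
    have "Dy H \<in> regular_at p"
      using H 0 B0 p by (simp add: Dy_Fract Fract_in_regular_at prime_elem_dvd_mult_iff)
    then have "Fract c p \<in> regular_at p"
      unfolding Hw using p Y by (intro regular_at_add Fract_in_regular_at)
    with p show ?thesis by (rule Fract_in_regular_at_imp_dvd)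
  next
    case (Suc k)
    with e Dy_Fract_pole_order[OF B0] obtain M where M: "\<not> p dvd M"
      and DyH: "Dy H = Fract M (p ^ Suc (Suc k) * (B0 * B0))"
      unfolding H by blast
    have "Fract M (p ^ Suc (Suc k) * (B0 * B0)) = Fract c p - Fract X Y"
      unfolding DyH[symmetric] Hw by simp
    also have "\<dots> = Fract (c * Y - X * p) (p * Y)" using Y p_neq_0 by simp
    finally have "M * (p * Y) = (c * Y - X * p) * (p ^ Suc (Suc k) * (B0 * B0))"
      using Y B0 p_neq_0 by (simp add: eq_fract)
    then have "p * (M * Y) = p * ((c * Y - X * p) * (p ^ Suc k * (B0 * B0)))"
      by (simp add: algebra_simps power_Suc)
    then have "M * Y = (c * Y - X * p) * (p ^ Suc k * (B0 * B0))" using p_neq_0 by simp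
    then have "p dvd M * Y" by simp
    with p M Y show ?thesis by (simp add: prime_elem_dvd_mult_iff)
  qed
qed

lemma partial_fraction_simple_pole:
  assumes B0: "B0 \<noteq> 0" "\<not> p dvd B0"
  shows "\<exists>c. Fract A (p * B0) - Fract c p \<in> regular_at p"
proof -
  obtain s t where st: "s * p + t * B0 = 1" using prime_elem_bezout[OF p B0(2)] by blast
  have "(A * p - A * t * (p * B0)) * B0 = A * s * (p * B0 * p)" using st by algebra
  then have "Fract A (p * B0) - Fract (A * t) p = Fract (A * s) B0"
    using B0 p_neq_0 by (simp add: eq_fract)
  with B0 show ?thesis by (metis Fract_in_regular_at)
qed

lemma Hermite_reduction_step:
  assumes B0: "B0 \<noteq> 0" "\<not> p dvd B0"
  shows "\<exists>N w. Fract A (p ^ Suc (Suc k) * B0) = Fract N (p ^ Suc k * B0) - Dy (Fract w (p ^ Suc k))"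
proof -
  have "\<not> p dvd pderiv p * B0" using p p_sep B0 by (simp add: prime_elem_dvd_mult_iff)
  then obtain s t where st: "s * p + t * (pderiv p * B0) = 1" using prime_elem_bezout[OF p] by blast
  define C where "C = [:of_nat (Suc k) :: 'a poly fract:]"
  define C' where "C' = [:inverse (of_nat (Suc k)) :: 'a poly fract:]"
  define w where "w = C' * (A * t)"
  have "C * C' = 1"
    using of_nat_Suc_fract_poly_neq_0[of k] by (simp add: C_def C'_def field_simps del: of_nat_Suc)
  then have Cw: "C * w = A * t" by (simp add: w_def mult.assoc[symmetric])
  define P where "P = p ^ k"
  define Q where "Q = P * p"
  define N where "N = A * s + pderiv w * B0"
  have "Q \<noteq> 0" using p_neq_0 by (simp add: Q_def P_def)
  have "pderiv Q = pderiv (p ^ Suc k)" by (simp add: Q_def P_def mult.commute)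
  also have "\<dots> = C * P * pderiv p"
    by (simp add: P_def C_def pderiv_power_Suc del: of_nat_Suc power_Suc)
  finally have dQ: "pderiv Q = C * P * pderiv p" .
  have "A * (Q * B0 * (Q * Q)) = (N * (Q * Q) - (pderiv w * Q - w * pderiv Q) * (Q * B0)) * (Q * p * B0)"
    using st Cw unfolding dQ unfolding N_def Q_def by algebra
  then have "Fract N (Q * B0) - Dy (Fract w Q) = Fract A (Q * p * B0)"
    using \<open>Q \<noteq> 0\<close> B0 p_neq_0 by (simp add: Dy_Fract eq_fract)
  moreover have "Q = p ^ Suc k" "Q * p * B0 = p ^ Suc (Suc k) * B0"
    by (simp_all add: Q_def P_def algebra_simps)
  ultimately show ?thesis by metis
qed

lemma simple_pole_part_exists_Fract:
  assumes B0: "B0 \<noteq> 0" "\<not> p dvd B0"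
  shows "\<exists>c. Fract A (p ^ e * B0) - Fract c p \<in> regular_mod_Dy p"
proof (induction e arbitrary: A rule: less_induct)
  case (less e)
  consider "e = 0" | "e = 1" | k where "e = Suc (Suc k)"
    by (metis One_nat_def not0_implies_Suc)
  then show ?case
  proof cases
    case 1
    have "Fract 0 p = 0" by (simp add: Zero_fract_def eq_fract)
    with 1 have "Fract A (p ^ e * B0) - Fract 0 p = Fract A B0" by simp
    also have "\<dots> \<in> regular_at p" using B0 by (rule Fract_in_regular_at)
    finally show ?thesis using regular_at_subset_regular_mod_Dy[OF p] by blast
  next
    case 2
    with partial_fraction_simple_pole[OF B0] regular_at_subset_regular_mod_Dy[OF p]
    show ?thesis by auto
  next
    case 3
    obtain N w where Nw: "Fract A (p ^ e * B0) = Fract N (p ^ Suc k * B0) - Dy (Fract w (p ^ Suc k))"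
      using Hermite_reduction_step[OF B0] 3 by blast
    obtain c where c: "Fract N (p ^ Suc k * B0) - Fract c p \<in> regular_mod_Dy p"
      using less.IH[of "Suc k" N] 3 by auto
    have "Fract A (p ^ e * B0) - Fract c p =
        (Fract N (p ^ Suc k * B0) - Fract c p) - Dy (Fract w (p ^ Suc k))"
      unfolding Nw by (simp add: algebra_simps)
    also have "\<dots> \<in> regular_mod_Dy p"
      by (rule regular_mod_Dy_diff[OF p c Dy_in_regular_mod_Dy[OF p]])
    finally show ?thesis by blast
  qed
qed

lemma simple_pole_part_exists: "\<exists>c. u - Fract c p \<in> regular_mod_Dy p"
proof -
  obtain A B where u: "u = Fract A B" "B \<noteq> 0" by (cases u)
  from prime_power_factor_exists[OF p u(2)] obtain e B0 where B: "B = p ^ e * B0" "\<not> p dvd B0"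
    by blast
  with u simple_pole_part_exists_Fract[of B0 A e] show ?thesis by auto
qed

end


section \<open>Orbits of irreducible polynomials\<close>

lemma prime_not_dvd_prod:
  fixes \<pi> :: "'i \<Rightarrow> 'b::field poly"
  assumes prime: "\<And>n. prime_elem (\<pi> n)" and distinct: "\<And>n n'. \<pi> n dvd \<pi> n' \<Longrightarrow> n = n'"
  shows "finite F \<Longrightarrow> x \<notin> F \<Longrightarrow> \<not> \<pi> x dvd prod \<pi> F"
proof (induction F rule: finite_induct)
  case (insert y F)
  with distinct have "\<not> \<pi> x dvd \<pi> y" by blast
  with insert prime[of x] show ?case by (simp add: prime_elem_dvd_mult_iff)
qed (simp add: prime prime_elem_not_unit)

lemma prod_dvd_if_primes_dvd:
  fixes \<pi> :: "'i \<Rightarrow> 'b::field poly"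
  assumes prime: "\<And>n. prime_elem (\<pi> n)" and distinct: "\<And>n n'. \<pi> n dvd \<pi> n' \<Longrightarrow> n = n'"
  shows "finite F \<Longrightarrow> (\<forall>n\<in>F. \<pi> n dvd B) \<Longrightarrow> prod \<pi> F dvd B"
proof (induction F rule: finite_induct)
  case (insert x F)
  then have "prod \<pi> F dvd B" by simp
  then obtain X where X: "B = prod \<pi> F * X" by (elim dvdE)
  with insert.prems have "\<pi> x dvd prod \<pi> F * X" by simp
  with prime[of x] prime_not_dvd_prod[of \<pi>, OF prime distinct insert(1,2)] have "\<pi> x dvd X"
    by (simp add: prime_elem_dvd_mult_iff)
  then obtain X' where "X = \<pi> x * X'" by (elim dvdE)
  with X insert(1,2) have "B = prod \<pi> (insert x F) * X'" by (simp add: mult_ac)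
  then show ?case by (rule dvdI)
qed simp

lemma finite_prime_divisors:
  fixes \<pi> :: "'i \<Rightarrow> 'b::field poly"
  assumes B: "B \<noteq> 0"
    and prime: "\<And>n. prime_elem (\<pi> n)" and distinct: "\<And>n n'. \<pi> n dvd \<pi> n' \<Longrightarrow> n = n'"
  shows "finite {n. \<pi> n dvd B}"
proof (rule ccontr)
  assume "infinite {n. \<pi> n dvd B}"
  then obtain F where F: "finite F" "card F = Suc (degree B)" "F \<subseteq> {n. \<pi> n dvd B}"
    using infinite_arbitrarily_large by blast
  have "card F \<le> (\<Sum>n\<in>F. degree (\<pi> n))"
    using sum_mono[of F "\<lambda>_. 1::nat" "\<lambda>n. degree (\<pi> n)"] prime_elem_degree_pos[OF prime]
    by (simp add: Suc_le_eq)
  also have "\<dots> = degree (prod \<pi> F)"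
    using prime by (simp add: degree_prod_sum_eq prime_elem_def)
  also have "\<dots> \<le> degree B"
    using prod_dvd_if_primes_dvd[of \<pi>, OF prime distinct F(1)] F(3) B by (auto intro: dvd_imp_degree_le)
  finally show False using F(2) by simp
qed

lemma regular_at_all_but_finitely_many:
  fixes \<pi> :: "int \<Rightarrow> 'a::field_char_0 poly fract poly"
  assumes prime: "\<And>n. prime_elem (\<pi> n)" and distinct: "\<And>n n'. \<pi> n dvd \<pi> n' \<Longrightarrow> n = n'"
  shows "\<exists>K::nat. \<forall>n. \<bar>n\<bar> \<ge> int K \<longrightarrow> G \<in> regular_at (\<pi> n)"
proof -
  obtain A B where G: "G = Fract A B" "B \<noteq> 0" by (cases G)
  have "finite {n. \<pi> n dvd B}" by (rule finite_prime_divisors[OF G(2) prime distinct])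
  then obtain K0 where K0: "abs ` {n. \<pi> n dvd B} \<subseteq> {..<K0}"
    using finite_int_iff_bounded by blast
  have "G \<in> regular_at (\<pi> n)" if "\<bar>n\<bar> \<ge> int (nat K0)" for n
  proof -
    have "\<not> \<pi> n dvd B"
    proof
      assume "\<pi> n dvd B"
      with K0 have "\<bar>n\<bar> < K0" by auto
      with that show False by linarith
    qed
    with G show ?thesis by (simp add: Fract_in_regular_at)
  qed
  then show ?thesis by blast
qed

lemma phi_pow_xy_periodic_imp_const_coeffs:
  fixes d :: "'a::field_char_0 poly poly"
  assumes q: "q \<noteq> 0" and nr: "\<forall>n::nat. n > 0 \<longrightarrow> q ^ n \<noteq> 1"
    and irr: "irreducible d" and dg: "degree d > 0" and N: "N \<noteq> 0"
    and per: "phi_pow_xy kd q N d = smult [:c:] d"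
  shows "\<forall>j. degree (coeff d j) = 0"
proof -
  have cf: "pcompose (coeff d j) (xsub kd q N) = smult c (coeff d j)" for j
    using arg_cong[OF per, of "\<lambda>P. coeff P j"] by (simp add: coeff_phi_pow_xy[OF q])
  show ?thesis
  proof (cases kd)
    case Shift
    with cf have "pcompose (coeff d j) [:of_int N, 1:] = smult c (coeff d j)" for j
      by (simp add: xsub_def)
    with irr N show ?thesis by (intro shift_periodic_imp_const_coeffs) auto
  next
    case QShift
    with cf have "pcompose (coeff d j) [:0, q powi N:] = smult c (coeff d j)" for j
      by (simp add: xsub_def)
    with irr dg power_power_int_inj[OF q nr N] show ?thesis
      by (intro scaling_periodic_imp_const_coeffs)
  qed
qed

context
  fixes kd :: op_kind and q :: "'a::field_char_0"
  assumes q: "q \<noteq> 0"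
begin

lemma prime_elem_emb_phi_pow_xy:
  assumes "irreducible d" "degree d > 0"
  shows "prime_elem (emb_xy (phi_pow_xy kd q n d))"
  using assms
  by (intro field_poly_irreducible_imp_prime irreducible_fract_poly irreducible_phi_pow_xy[OF q])
    (simp_all add: q)

lemma emb_phi_pow_xy_dvd_imp_smult:
  assumes d: "irreducible d" "degree d > 0" and e: "irreducible e" "degree e > 0"
    and dvd: "emb_xy (phi_pow_xy kd q n d) dvd emb_xy e"
  shows "\<exists>c. c \<noteq> 0 \<and> e = smult [:c:] (phi_pow_xy kd q n d)"
  using d e dvd
  by (intro fract_poly_dvd_irreducible_imp_smult irreducible_phi_pow_xy[OF q]) (simp_all add: q)

lemma emb_phi_pow_xy_dvd_orbit_imp_eq:
  assumes nr: "\<forall>n::nat. n > 0 \<longrightarrow> q ^ n \<noteq> 1"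
    and d: "irreducible d" "degree d > 0" and nc: "\<not> (\<forall>j. degree (coeff d j) = 0)"
    and dvd: "emb_xy (phi_pow_xy kd q n d) dvd emb_xy (phi_pow_xy kd q n' d)"
  shows "n = n'"
proof (rule ccontr)
  assume "n \<noteq> n'"
  obtain c where "phi_pow_xy kd q n' d = smult [:c:] (phi_pow_xy kd q n d)"
    using emb_phi_pow_xy_dvd_imp_smult[OF d irreducible_phi_pow_xy[OF q d(1)] _ dvd] d(2)
    by (auto simp: q)
  then have "phi_pow_xy kd q (- n) (phi_pow_xy kd q n' d) = smult [:c:] d"
    by (simp add: phi_pow_xy_smult_const[OF q] phi_pow_xy_inverse[OF q])
  then have "phi_pow_xy kd q (n' - n) d = smult [:c:] d"
    by (simp add: phi_pow_xy_phi_pow_xy[OF q])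
  with \<open>n \<noteq> n'\<close> phi_pow_xy_periodic_imp_const_coeffs[OF q nr d, where N="n' - n"] nc
  show False by simp
qed

lemma sum_funpow_phi_xy_telescope:
  "(\<Sum>j<N. (phi_xy kd q ^^ j) (phi_xy kd q G - G)) = (phi_xy kd q ^^ N) G - G"
proof -
  have "(\<Sum>j<N. (phi_xy kd q ^^ j) (phi_xy kd q G - G)) =
      (\<Sum>j<N. (phi_xy kd q ^^ Suc j) G - (phi_xy kd q ^^ j) G)"
    by (rule sum.cong) (simp_all add: funpow_phi_xy_diff[OF q] funpow_swap1)
  also have "\<dots> = (phi_xy kd q ^^ N) G - (phi_xy kd q ^^ 0) G" by (rule sum_lessThan_telescope)
  finally show ?thesis by simp
qed

(* Summing phi^j of the congruence over j < 2K + 1 telescopes the left side; among the shifted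
   terms phi^j(T) only the one with j = K can have a pole at pi K. *)
lemma funpow_phi_xy_term_regular_mod_Dy:
  fixes \<pi> :: "int \<Rightarrow> 'a poly fract poly"
  assumes prime: "\<And>n. prime_elem (\<pi> n)"
    and shift: "\<And>n j. phi_y_pow kd q (int j) (\<pi> n) = \<pi> (n + int j)"
    and G: "\<And>n. \<bar>n\<bar> \<ge> int K \<Longrightarrow> G \<in> regular_mod_Dy (\<pi> n)"
    and E: "\<And>n. phi_xy kd q G - G - T \<in> regular_mod_Dy (\<pi> n)"
    and T: "\<And>n. n \<noteq> 0 \<Longrightarrow> T \<in> regular_at (\<pi> n)"
  shows "(phi_xy kd q ^^ K) T \<in> regular_mod_Dy (\<pi> (int K))"
proof -
  let ?R = "regular_mod_Dy (\<pi> (int K))" and ?\<phi> = "\<lambda>j. phi_xy kd q ^^ j"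
  have push: "?\<phi> j u \<in> ?R" if "u \<in> regular_mod_Dy (\<pi> (int K - int j))" for u j
    using funpow_phi_xy_regular_mod_Dy[OF q that, where kd=kd and j=j] shift[of j "int K - int j"]
    by simp
  have "?\<phi> j (phi_xy kd q G - G) - (if j = K then ?\<phi> K T else 0) \<in> ?R" for j
  proof (cases "j = K")
    case True
    have "?\<phi> K (phi_xy kd q G - G - T) \<in> ?R" by (rule push, rule E)
    with True show ?thesis by (simp add: funpow_phi_xy_diff[OF q])
  next
    case False
    have "phi_xy kd q G - G = (phi_xy kd q G - G - T) + T" by simp
    also have "\<dots> \<in> regular_mod_Dy (\<pi> (int K - int j))"
      using False T[of "int K - int j"] regular_at_subset_regular_mod_Dy[OF prime]
      by (intro regular_mod_Dy_add prime E) auto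
    finally have "?\<phi> j (phi_xy kd q G - G) \<in> ?R" by (rule push)
    with False show ?thesis by simp
  qed
  then have "(\<Sum>j<Suc (2 * K). ?\<phi> j (phi_xy kd q G - G) - (if j = K then ?\<phi> K T else 0)) \<in> ?R"
    by (intro regular_mod_Dy_sum prime)
  moreover have "(\<Sum>j<Suc (2 * K). if j = K then ?\<phi> K T else 0) = ?\<phi> K T"
    by (simp only: sum.delta finite_lessThan) simp
  ultimately have telescoped: "(?\<phi> (Suc (2 * K)) G - G) - ?\<phi> K T \<in> ?R"
    by (simp only: sum_subtractf sum_funpow_phi_xy_telescope)
  have "?\<phi> (Suc (2 * K)) G \<in> ?R" by (rule push, rule G) simp
  moreover have "G \<in> ?R" by (rule G) simp
  ultimately have "?\<phi> (Suc (2 * K)) G - G \<in> ?R" by (rule regular_mod_Dy_diff[OF prime])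
  from regular_mod_Dy_diff[OF prime this telescoped] show ?thesis by simp
qed

end


section \<open>Exactness of a reduced form\<close>

context
  fixes kd :: op_kind and q :: "'a::field_char_0"
  assumes q: "q \<noteq> 0"
begin

lemma phi_difference_minus_term_regular_mod_Dy:
  fixes a :: "nat \<Rightarrow> 'a poly fract poly" and d :: "nat \<Rightarrow> 'a poly poly"
  assumes irr: "\<forall>i\<in>{1..m}. irreducible (d i) \<and> degree (d i) > 0"
    and orb: "\<forall>i\<in>{1..m}. \<forall>j\<in>{1..m}. i \<noteq> j \<longrightarrow> \<not> same_orbit kd q (d i) (d j)"
    and S: "(\<Sum>i=1..m. Fract (a i) (emb_xy (d i))) = phi_xy kd q G - G + Dy H"
    and i: "i \<in> {1..m}"
  shows "phi_xy kd q G - G - Fract (a i) (emb_xy (d i)) \<in> regular_mod_Dy (emb_xy (phi_pow_xy kd q n (d i)))"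
proof -
  let ?\<pi> = "emb_xy (phi_pow_xy kd q n (d i))" and ?T = "\<lambda>j. Fract (a j) (emb_xy (d j))"
  have \<pi>: "prime_elem ?\<pi>" using irr i by (intro prime_elem_emb_phi_pow_xy[OF q]) auto
  have "?T j \<in> regular_at ?\<pi>" if j: "j \<in> {1..m} - {i}" for j
  proof (rule Fract_in_regular_at)
    show "emb_xy (d j) \<noteq> 0" using irr j by (auto simp: irreducible_def)
    show "\<not> ?\<pi> dvd emb_xy (d j)"
    proof
      assume "?\<pi> dvd emb_xy (d j)"
      with irr i j obtain c where "c \<noteq> 0" "d j = smult [:c:] (phi_pow_xy kd q n (d i))"
        using emb_phi_pow_xy_dvd_imp_smult[OF q] by blast
      then have "same_orbit kd q (d i) (d j)" unfolding same_orbit_def by blast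
      with orb i j show False by auto
    qed
  qed
  then have "(\<Sum>j\<in>{1..m} - {i}. ?T j) \<in> regular_at ?\<pi>" by (rule regular_at_sum[OF \<pi>])
  then have rest: "(\<Sum>j\<in>{1..m} - {i}. ?T j) - Dy H \<in> regular_mod_Dy ?\<pi>"
    using regular_at_subset_regular_mod_Dy[OF \<pi>]
    by (intro regular_mod_Dy_diff[OF \<pi>] Dy_in_regular_mod_Dy[OF \<pi>]) auto
  have "(\<Sum>j=1..m. ?T j) = ?T i + (\<Sum>j\<in>{1..m} - {i}. ?T j)"
    using i by (intro sum.remove) auto
  with S have "?T i + (\<Sum>j\<in>{1..m} - {i}. ?T j) = (phi_xy kd q G - G) + Dy H" by simp
  moreover have "z - x = y - w" if "x + y = z + w" for x y z w :: "'a poly fract poly fract"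
    using that by (simp add: algebra_simps)
  ultimately have "phi_xy kd q G - G - ?T i = (\<Sum>j\<in>{1..m} - {i}. ?T j) - Dy H" by blast
  with rest show ?thesis by simp
qed

lemma const_coeffs_if_orbit_congruence:
  assumes nr: "\<forall>n::nat. n > 0 \<longrightarrow> q ^ n \<noteq> 1"
    and irr: "irreducible d" and a: "a \<noteq> 0" "degree a < degree d"
    and E: "\<And>n. phi_xy kd q G - G - Fract a (emb_xy d) \<in> regular_mod_Dy (emb_xy (phi_pow_xy kd q n d))"
  shows "\<forall>j. degree (coeff d j) = 0"
proof (rule ccontr)
  assume nc: "\<not> (\<forall>j. degree (coeff d j) = 0)"
  define \<pi> where "\<pi> n = emb_xy (phi_pow_xy kd q n d)" for n
  have dg: "degree d > 0" using a by linarith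
  have prime: "prime_elem (\<pi> n)" for n
    unfolding \<pi>_def using irr dg by (rule prime_elem_emb_phi_pow_xy[OF q])
  have distinct: "n = n'" if "\<pi> n dvd \<pi> n'" for n n'
    using emb_phi_pow_xy_dvd_orbit_imp_eq[OF q nr irr dg nc] that by (simp add: \<pi>_def)
  obtain K where "\<And>n. \<bar>n\<bar> \<ge> int K \<Longrightarrow> G \<in> regular_at (\<pi> n)"
    using regular_at_all_but_finitely_many[of \<pi>, OF prime distinct] by blast
  then have "G \<in> regular_mod_Dy (\<pi> n)" if "\<bar>n\<bar> \<ge> int K" for n
    using that regular_at_subset_regular_mod_Dy[OF prime] by blast
  moreover have "Fract a (emb_xy d) \<in> regular_at (\<pi> n)" if "n \<noteq> 0" for n
    using distinct[of n 0] that irr by (intro Fract_in_regular_at) (auto simp: \<pi>_def q)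
  moreover have "phi_y_pow kd q (int j) (\<pi> n) = \<pi> (n + int j)" for n j
    by (simp add: \<pi>_def phi_y_pow_emb_xy[OF q] phi_pow_xy_phi_pow_xy[OF q])
  ultimately have "(phi_xy kd q ^^ K) (Fract a (emb_xy d)) \<in> regular_mod_Dy (\<pi> (int K))"
    using E by (intro funpow_phi_xy_term_regular_mod_Dy[OF q prime]) (simp_all add: \<pi>_def)
  moreover have "(phi_xy kd q ^^ K) (Fract a (emb_xy d)) = Fract (phi_y_pow kd q (int K) a) (\<pi> (int K))"
    using irr by (simp add: \<pi>_def funpow_phi_xy_Fract[OF q] phi_y_pow_emb_xy[OF q] irreducible_def)
  ultimately have "\<pi> (int K) dvd phi_y_pow kd q (int K) a"
    using dvd_if_simple_pole_in_regular_mod_Dy[OF prime not_dvd_pderiv] dg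
    by (simp add: \<pi>_def degree_map_poly q)
  then have "degree (\<pi> (int K)) \<le> degree a"
    using a(1) dvd_imp_degree_le[of "\<pi> (int K)" "phi_y_pow kd q (int K) a"] by (simp add: q)
  with a(2) show False by (simp add: \<pi>_def degree_map_poly q)
qed

lemma phi_difference_if_congruence:
  assumes p: "prime_elem p" "\<not> p dvd pderiv p" and inv: "phi_y_pow kd q 1 p = p"
    and dg: "degree a < degree p"
    and E: "phi_xy kd q G - G - Fract a p \<in> regular_mod_Dy p"
  shows "\<exists>b. a = phi_y kd q b - b"
proof -
  have "p \<noteq> 0" using p by auto
  obtain c where c: "G - Fract c p \<in> regular_mod_Dy p" using simple_pole_part_exists[OF p] by blast
  from funpow_phi_xy_regular_mod_Dy[OF q c, where j=1 and kd=kd]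
  have c1: "phi_xy kd q G - Fract (phi_y_pow kd q 1 c) p \<in> regular_mod_Dy p"
    using \<open>p \<noteq> 0\<close> inv by (simp add: phi_xy_diff[OF q] phi_xy_Fract[OF q])
  have "Fract (phi_y_pow kd q 1 c - c - a) p =
      (phi_xy kd q G - G - Fract a p) - (phi_xy kd q G - Fract (phi_y_pow kd q 1 c) p) + (G - Fract c p)"
    using \<open>p \<noteq> 0\<close> by (simp add: Fract_conv_to_fract diff_divide_distrib)
  also have "\<dots> \<in> regular_mod_Dy p"
    by (intro regular_mod_Dy_add[OF p(1)] regular_mod_Dy_diff[OF p(1)] E c1 c)
  finally have dvd: "p dvd phi_y_pow kd q 1 c - c - a"
    by (rule dvd_if_simple_pole_in_regular_mod_Dy[OF p])
  define c0 where "c0 = c mod p"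
  define t where "t = c div p"
  have "c = c0 + p * t" by (simp add: c0_def t_def mod_mult_div_eq)
  then have "phi_y_pow kd q 1 c = phi_y_pow kd q 1 c0 + p * phi_y_pow kd q 1 t"
    by (simp add: phi_y_pow_add[OF q] phi_y_pow_mult[OF q] inv)
  with \<open>c = c0 + p * t\<close>
  have eq: "phi_y_pow kd q 1 c0 - c0 - a = (phi_y_pow kd q 1 c - c - a) - p * (phi_y_pow kd q 1 t - t)"
    by (simp add: algebra_simps)
  have "p dvd (phi_y_pow kd q 1 c - c - a) - p * (phi_y_pow kd q 1 t - t)"
    by (rule dvd_diff[OF dvd]) simp
  then have dvd0: "p dvd phi_y_pow kd q 1 c0 - c0 - a" by (simp only: eq)
  have "degree c0 < degree p"
    using degree_mod_less[OF \<open>p \<noteq> 0\<close>, of c] dg unfolding c0_def by (cases "c mod p = 0") auto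
  with dg have deg: "degree (phi_y_pow kd q 1 c0 - c0 - a) < degree p"
    by (intro degree_diff_less) (simp_all add: q)
  have "phi_y_pow kd q 1 c0 - c0 - a = 0"
  proof (rule ccontr)
    assume "phi_y_pow kd q 1 c0 - c0 - a \<noteq> 0"
    with dvd_imp_degree_le[OF dvd0] deg show False by simp
  qed
  then show ?thesis by (intro exI[of _ c0]) (simp add: phi_y_eq_phi_y_pow)
qed

lemma phi_difference_of_sum:
  assumes d: "\<forall>i\<in>{1..m}. d i \<noteq> 0 \<and> (\<forall>j. degree (coeff (d i) j) = 0)"
    and b: "\<forall>i\<in>{1..m}. a i = phi_y kd q (b i) - b i"
  shows "(\<Sum>i=1..m. Fract (a i) (emb_xy (d i))) =
    phi_xy kd q (\<Sum>i=1..m. Fract (b i) (emb_xy (d i))) - (\<Sum>i=1..m. Fract (b i) (emb_xy (d i)))"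
proof -
  have "phi_xy kd q (Fract (b i) (emb_xy (d i))) - Fract (b i) (emb_xy (d i)) = Fract (a i) (emb_xy (d i))"
    if i: "i \<in> {1..m}" for i
  proof -
    have "emb_xy (d i) \<noteq> 0" "phi_y_pow kd q 1 (emb_xy (d i)) = emb_xy (d i)"
      using d i by (simp_all add: phi_y_pow_emb_xy[OF q] phi_pow_xy_const_coeffs[OF q])
    then have "phi_xy kd q (Fract (b i) (emb_xy (d i))) - Fract (b i) (emb_xy (d i)) =
        Fract (phi_y_pow kd q 1 (b i)) (emb_xy (d i)) - Fract (b i) (emb_xy (d i))"
      by (simp add: phi_xy_Fract[OF q])
    also have "\<dots> = Fract (phi_y_pow kd q 1 (b i) - b i) (emb_xy (d i))"
      by (simp add: Fract_conv_to_fract diff_divide_distrib)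
    finally show ?thesis using b i by (simp add: phi_y_eq_phi_y_pow)
  qed
  then show ?thesis by (simp add: phi_xy_sum[OF q] flip: sum_subtractf)
qed

lemma residue_conditions_if_phi_difference:
  fixes a :: "nat \<Rightarrow> 'a poly fract poly" and d :: "nat \<Rightarrow> 'a poly poly"
  assumes nr: "\<forall>n::nat. n > 0 \<longrightarrow> q ^ n \<noteq> 1"
    and ad: "\<forall>i\<in>{1..m}. a i \<noteq> 0 \<and> irreducible (d i) \<and> degree (a i) < degree (d i)"
    and orb: "\<forall>i\<in>{1..m}. \<forall>j\<in>{1..m}. i \<noteq> j \<longrightarrow> \<not> same_orbit kd q (d i) (d j)"
    and S: "(\<Sum>i=1..m. Fract (a i) (emb_xy (d i))) = phi_xy kd q G - G + Dy H"
    and i: "i \<in> {1..m}"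
  shows "(\<forall>j. degree (coeff (d i) j) = 0) \<and> (\<exists>b. a i = phi_y kd q b - b)"
proof
  from ad i have ai: "a i \<noteq> 0" "irreducible (d i)" "degree (a i) < degree (d i)" by auto
  have E: "phi_xy kd q G - G - Fract (a i) (emb_xy (d i))
      \<in> regular_mod_Dy (emb_xy (phi_pow_xy kd q n (d i)))" for n
    using ad orb S i by (intro phi_difference_minus_term_regular_mod_Dy) auto
  show const: "\<forall>j. degree (coeff (d i) j) = 0"
    using E by (rule const_coeffs_if_orbit_congruence[OF nr ai(2) ai(1,3)])
  have "prime_elem (emb_xy (d i))" "\<not> emb_xy (d i) dvd pderiv (emb_xy (d i))"
    using prime_elem_emb_phi_pow_xy[OF q ai(2), where kd=kd and n=0] ai
    by (auto intro!: not_dvd_pderiv simp: q degree_map_poly)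
  moreover have "phi_y_pow kd q 1 (emb_xy (d i)) = emb_xy (d i)"
    using const by (simp add: phi_y_pow_emb_xy[OF q] phi_pow_xy_const_coeffs[OF q])
  ultimately show "\<exists>b. a i = phi_y kd q b - b"
    using E[of 0] ai(3) by (intro phi_difference_if_congruence) (simp_all add: q degree_map_poly)
qed

end

theorem theorem2:
  fixes kd :: op_kind and q :: "'a::field_char_0"
    and f g h :: "'a poly fract poly fract"
    and m :: nat and a :: "nat \<Rightarrow> 'a poly fract poly" and d :: "nat \<Rightarrow> 'a poly poly"
  assumes "q \<noteq> 0" and "\<forall>n::nat. n > 0 \<longrightarrow> q ^ n \<noteq> 1"
    and "f = phi_xy kd q g - g + Dy h + (\<Sum>i=1..m. Fract (a i) (emb_xy (d i)))"
    and "\<forall>i\<in>{1..m}. a i \<noteq> 0 \<and> irreducible (d i) \<and> degree (a i) < degree (d i)"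
    and "\<forall>i\<in>{1..m}. \<forall>j\<in>{1..m}. i \<noteq> j \<longrightarrow> \<not> same_orbit kd q (d i) (d j)"
  shows "exact_phi kd q f \<longleftrightarrow>
    (\<forall>i\<in>{1..m}. (\<forall>j. degree (coeff (d i) j) = 0) \<and>
                 (\<exists>b. a i = phi_y kd q b - b))"
proof
  assume "exact_phi kd q f"
  then obtain g' h' where "f = phi_xy kd q g' - g' + Dy h'" unfolding exact_phi_def by blast
  with assms(3) have "(\<Sum>i=1..m. Fract (a i) (emb_xy (d i))) =
      phi_xy kd q (g' - g) - (g' - g) + Dy (h' - h)"
    by (simp add: phi_xy_diff[OF assms(1)] Dy_diff algebra_simps)
  with residue_conditions_if_phi_difference[OF assms(1,2,4,5)]
  show "\<forall>i\<in>{1..m}. (\<forall>j. degree (coeff (d i) j) = 0) \<and> (\<exists>b. a i = phi_y kd q b - b)"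
    by blast
next
  assume "\<forall>i\<in>{1..m}. (\<forall>j. degree (coeff (d i) j) = 0) \<and> (\<exists>b. a i = phi_y kd q b - b)"
  then obtain b where "\<forall>i\<in>{1..m}. (\<forall>j. degree (coeff (d i) j) = 0) \<and> a i = phi_y kd q (b i) - b i"
    by metis
  with assms(4) phi_difference_of_sum[OF assms(1), where kd=kd and m=m and d=d and a=a and b=b]
  obtain G where "(\<Sum>i=1..m. Fract (a i) (emb_xy (d i))) = phi_xy kd q G - G"
    by (auto simp: irreducible_def)
  with assms(3) have "f = phi_xy kd q (g + G) - (g + G) + Dy h"
    by (simp add: phi_xy_add[OF assms(1)] algebra_simps)
  then show "exact_phi kd q f" unfolding exact_phi_def by blast
qed

end
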